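(* Let $I$ be a nonempty set and $H$ a real Hilbert space; for each $i\in I$ let $C_i$ be a nonempty compact convex subset of $H$. Equip $H^I$ with the product topology generated by the norm topology on each factor $H$. Let $S=\mathbb{R}^+=[0,\infty)$ (under addition) and for each $i\in I$ let $\mathcal{S}_i=\{T_{t,i}:t\in\mathbb{R}^+\}$ be a representation of $\mathbb{R}^+$ as nonexpansive mappings from $C_i$ into itself with $\mathrm{Fix}(\mathcal{S}_i)\neq\emptyset$. Let $X$ be a left invariant subspace of $C(\mathbb{R}^+)$ with $1\in X$, such that for every $i\in I$, $x\in C_i$, $y\in H$ the function $t\mapsto\langle T_{t,i}x,y\rangle$ belongs to $X$. For each $i\in I$ let $f_i:C_i\to C_i$ be an $\alpha_i$-contraction ($0\le\alpha_i<1$). Let $\{\epsilon_n\}\subseteq(0,1)$ with $\lim_n\epsilon_n=0$ and $\{a_n\}\subseteq(0,\infty)$ with $\lim_na_n=\infty$. Then for each $i\in I$ there exist a unique sunny nonexpansive retraction $P_i$ of $C_i$ onto $\mathrm{Fix}(\mathcal{S}_i)$ and a point $x_i\in C_i$ such that the sequence $\{g_n\}$ in $H^I$ defined by $g_n(i)=z_{n,i}$ $(i\in I)$, where $z_{n,i}\in C_i$ satisfies $$z_{n,i}=\epsilon_nf_i(z_{n,i})+(1-\epsilon_n)\frac1{a_n}\int_0^{a_n}T_{t,i}z_{n,i}\,dt,$$ converges in the product topology of $H^I$ to the function $g:I\to H$ defined by $g(i)=P_ix_i$.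
   Context: A family $\{T_t:t\in\mathbb{R}^+\}$ of self-maps of $C$ is a representation of $\mathbb{R}^+$ as nonexpansive mappings if $T_{s+t}x=T_sT_tx$ for all $s,t\ge0$, $x\in C$, and each $T_t$ is nonexpansive; $\mathrm{Fix}(\mathcal{S})=\bigcap_t\{x:T_tx=x\}$. A subspace $X\subseteq C(\mathbb{R}^+)$ (bounded continuous functions) is left invariant if $t\mapsto h(s+t)$ lies in $X$ whenever $h\in X$, $s\ge0$. The integral $\frac1{a}\int_0^{a}T_{t,i}z\,dt$ denotes the unique $w\in H$ with $\langle w,y\rangle=\frac1a\int_0^a\langle T_{t,i}z,y\rangle\,dt$ for all $y\in H$. A retraction $P$ of $C$ onto $D$ is sunny if $P(Px+t(x-Px))=Px$ whenever $x\in C$, $t\ge0$, $Px+t(x-Px)\in C$. *)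

theory Defs
  imports "HOL-Analysis.Analysis"
begin

text \<open>A real Hilbert space is a complete real inner product space:
  we use a type of class real_inner and complete_space.\<close>

definition nonexpansive_on :: "'a::metric_space set \<Rightarrow> ('a \<Rightarrow> 'a) \<Rightarrow> bool" where
  "nonexpansive_on C T \<longleftrightarrow> (\<forall>x\<in>C. \<forall>y\<in>C. dist (T x) (T y) \<le> dist x y)"

text \<open>Representation of the additive semigroup [0,inf) as nonexpansive self-maps of C.
  T t is only meaningful for t \<ge> 0.\<close>
definition nonexp_semigroup_rep :: "'a::real_normed_vector set \<Rightarrow> (real \<Rightarrow> 'a \<Rightarrow> 'a) \<Rightarrow> bool" where
  "nonexp_semigroup_rep C T \<longleftrightarrow>
     (\<forall>t\<ge>0. T t ` C \<subseteq> C \<and> nonexpansive_on C (T t)) \<and>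
     (\<forall>s\<ge>0. \<forall>t\<ge>0. \<forall>x\<in>C. T (s + t) x = T s (T t x))"

definition Fix_rep :: "'a set \<Rightarrow> (real \<Rightarrow> 'a \<Rightarrow> 'a) \<Rightarrow> 'a set" where
  "Fix_rep C T = {x \<in> C. \<forall>t\<ge>0. T t x = x}"

text \<open>Functions on R+ are represented by functions real => real; only their values
  on [0,inf) matter. "h is in X" means some element of X agrees with h on [0,inf).\<close>
definition in_fnspace :: "(real \<Rightarrow> real) set \<Rightarrow> (real \<Rightarrow> real) \<Rightarrow> bool" where
  "in_fnspace X h \<longleftrightarrow> (\<exists>g\<in>X. \<forall>t\<ge>0. g t = h t)"

definition bcont_Rplus :: "(real \<Rightarrow> real) set" where
  "bcont_Rplus = {h. continuous_on {0..} h \<and> bounded (h ` {0..})}"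

definition left_invariant_subspace :: "(real \<Rightarrow> real) set \<Rightarrow> bool" where
  "left_invariant_subspace X \<longleftrightarrow>
     X \<subseteq> bcont_Rplus \<and>
     in_fnspace X (\<lambda>t. 0) \<and>
     (\<forall>g\<in>X. \<forall>h\<in>X. in_fnspace X (\<lambda>t. g t + h t)) \<and>
     (\<forall>g\<in>X. \<forall>c::real. in_fnspace X (\<lambda>t. c * g t)) \<and>
     (\<forall>h\<in>X. \<forall>s\<ge>0. in_fnspace X (\<lambda>t. h (s + t)))"

text \<open>The weak integral (1/a) int_0^a T t z dt: the unique w with
  <w,y> = (1/a) int_0^a <T t z, y> dt for all y.\<close>
definition avg_integral :: "(real \<Rightarrow> 'a::real_inner \<Rightarrow> 'a) \<Rightarrow> real \<Rightarrow> 'a \<Rightarrow> 'a" where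
  "avg_integral T a z = (THE w. \<forall>y. inner w y = (1 / a) * integral {0..a} (\<lambda>t. inner (T t z) y))"

definition contraction_on :: "'a::metric_space set \<Rightarrow> real \<Rightarrow> ('a \<Rightarrow> 'a) \<Rightarrow> bool" where
  "contraction_on C \<alpha> f \<longleftrightarrow> 0 \<le> \<alpha> \<and> \<alpha> < 1 \<and> f ` C \<subseteq> C \<and>
     (\<forall>x\<in>C. \<forall>y\<in>C. dist (f x) (f y) \<le> \<alpha> * dist x y)"

definition sunny_nonexp_retraction :: "'a::real_normed_vector set \<Rightarrow> 'a set \<Rightarrow> ('a \<Rightarrow> 'a) \<Rightarrow> bool" where
  "sunny_nonexp_retraction C D P \<longleftrightarrow>
     D \<subseteq> C \<and> P ` C \<subseteq> D \<and> (\<forall>x\<in>D. P x = x) \<and> nonexpansive_on C P \<and>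
     (\<forall>x\<in>C. \<forall>t\<ge>0. P x + t *\<^sub>R (x - P x) \<in> C \<longrightarrow> P (P x + t *\<^sub>R (x - P x)) = P x)"

end

(* Everything happens coordinatewise, since convergence in the product topology is convergence in
   each coordinate; fix an index and drop it.  The time averages u = (1/a) int_0^a T_t z dt are
   nonexpansive self-maps of C, so the implicit equation is solved by Banach's fixed point theorem.
   Sunniness forces a nonexpansive retraction onto Fix to satisfy the variational inequality of the
   metric projection P, so P is the unique sunny nonexpansive retraction.  Let p = P (f p), again by
   Banach.  A variance identity for the orbit gives a |T_h u - u|^2 <= h (diam C)^2, so as a -> oo
   the averages become almost fixed and every cluster point of the iterates z_n lies in Fix.  From
   z_n = eps f z_n + (1 - eps) u_n one gets (1 - alpha) |z_n - p|^2 <= <f p - p, z_n - p>, and the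
   variational inequality <f p - p, q - p> <= 0 for q in Fix forces every cluster point to be p. *)

theory Submission
  imports Defs
begin

section \<open>Metric projection and sunny nonexpansive retractions\<close>

text \<open>The library's \<open>closest_point\<close> is restricted to \<open>heine_borel\<close> spaces; here existence of
  the nearest point comes from compactness of the set instead.\<close>

definition metric_proj :: "'a::real_inner set \<Rightarrow> 'a \<Rightarrow> 'a" where
  "metric_proj S a = (SOME x. x \<in> S \<and> (\<forall>y\<in>S. dist a x \<le> dist a y))"

lemma metric_proj_exists:
  fixes S :: "'a::real_inner set"
  assumes "compact S" "S \<noteq> {}"
  shows metric_proj_in: "metric_proj S a \<in> S"
    and metric_proj_le: "\<forall>y\<in>S. dist a (metric_proj S a) \<le> dist a y"
proof -
  have "continuous_on S (dist a)" by (intro continuous_intros)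
  then have "\<exists>x. x \<in> S \<and> (\<forall>y\<in>S. dist a x \<le> dist a y)"
    using continuous_attains_inf[OF assms] by blast
  then have "metric_proj S a \<in> S \<and> (\<forall>y\<in>S. dist a (metric_proj S a) \<le> dist a y)"
    unfolding metric_proj_def by (rule someI_ex)
  then show "metric_proj S a \<in> S" "\<forall>y\<in>S. dist a (metric_proj S a) \<le> dist a y" by auto
qed

lemma metric_proj_dot:
  fixes S :: "'a::real_inner set"
  assumes "compact S" "convex S" "y \<in> S"
  shows "inner (a - metric_proj S a) (y - metric_proj S a) \<le> 0"
  using assms metric_proj_exists[of S a] by (intro any_closest_point_dot) (auto intro: compact_imp_closed)

lemma metric_proj_eqI:
  fixes S :: "'a::real_inner set"
  assumes "compact S" "convex S" "x \<in> S" and dot: "\<And>y. y \<in> S \<Longrightarrow> inner (a - x) (y - x) \<le> 0"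
  shows "metric_proj S a = x"
proof -
  let ?p = "metric_proj S a"
  have "inner (a - x) (?p - x) \<le> 0" "inner (a - ?p) (x - ?p) \<le> 0"
    using assms by (auto intro: dot metric_proj_in metric_proj_dot)
  then have "inner (?p - x) (?p - x) \<le> 0"
    by (simp add: inner_diff_left inner_diff_right inner_commute)
  then show ?thesis by (metis inner_eq_zero_iff inner_ge_zero order_antisym right_minus_eq)
qed

lemma metric_proj_self: "x \<in> S \<Longrightarrow> metric_proj S x = x"
  unfolding metric_proj_def by (rule some1_equality, rule ex1I[of _ x]) auto

lemma metric_proj_nonexpansive:
  fixes S :: "'a::real_inner set"
  assumes "compact S" "convex S" "S \<noteq> {}"
  shows "dist (metric_proj S x) (metric_proj S y) \<le> dist x y"
proof -
  have "inner (x - metric_proj S x) (metric_proj S y - metric_proj S x) \<le> 0"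
    and "inner (y - metric_proj S y) (metric_proj S x - metric_proj S y) \<le> 0"
    using assms by (simp_all add: metric_proj_dot metric_proj_in)
  then show ?thesis unfolding dist_norm and norm_le
    using inner_ge_zero[of "(x - metric_proj S x) - (y - metric_proj S y)"]
    by (simp add: inner_add inner_diff inner_commute)
qed

lemma metric_proj_sunny_nonexp_retraction:
  fixes S :: "'a::real_inner set"
  assumes "compact S" "convex S" "S \<noteq> {}" "S \<subseteq> C"
  shows "sunny_nonexp_retraction C S (metric_proj S)"
proof -
  have "metric_proj S (metric_proj S x + t *\<^sub>R (x - metric_proj S x)) = metric_proj S x"
    if "0 \<le> t" for x and t :: real
    using assms(1-3) that
    by (intro metric_proj_eqI) (auto simp: metric_proj_in metric_proj_dot mult_nonneg_nonpos)
  then show ?thesis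
    using assms metric_proj_in[OF assms(1,3)] metric_proj_nonexpansive[OF assms(1-3)]
    unfolding sunny_nonexp_retraction_def nonexpansive_on_def by (auto simp: metric_proj_self)
qed

lemma sunny_nonexp_retraction_dot:
  fixes C :: "'a::real_inner set"
  assumes Q: "sunny_nonexp_retraction C F Q" and "convex C" "x \<in> C" "y \<in> F"
  shows "inner (x - Q x) (y - Q x) \<le> 0"
proof (rule ccontr)
  assume "\<not> ?thesis"
  then obtain u where u: "0 < u" "u \<le> 1" and closer: "dist (Q x + u *\<^sub>R (x - Q x)) y < dist (Q x) y"
    using closer_point_lemma[of y "Q x" x] by (auto simp: inner_commute)
  have "Q x \<in> C" "y \<in> C" using Q assms(3,4) unfolding sunny_nonexp_retraction_def by auto
  then have "Q x + u *\<^sub>R (x - Q x) \<in> C"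
    using convexD_alt[OF assms(2) \<open>Q x \<in> C\<close> assms(3), of u] u by (simp add: algebra_simps)
  then have "dist (Q x) (Q y) \<le> dist (Q x + u *\<^sub>R (x - Q x)) y"
    using Q assms(3,4) u unfolding sunny_nonexp_retraction_def nonexpansive_on_def
    by (metis \<open>y \<in> C\<close> less_eq_real_def)
  moreover have "Q y = y" using Q assms(4) unfolding sunny_nonexp_retraction_def by auto
  ultimately show False using closer by simp
qed

lemma sunny_nonexp_retraction_unique:
  fixes C :: "'a::real_inner set"
  assumes "sunny_nonexp_retraction C F Q" "convex C" "compact F" "convex F" "x \<in> C"
  shows "Q x = metric_proj F x"
  using assms sunny_nonexp_retraction_dot[OF assms(1,2,5)]
  by (intro metric_proj_eqI[symmetric]) (auto simp: sunny_nonexp_retraction_def)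

section \<open>Weak integrals\<close>

text \<open>The sort \<open>{real_inner, complete_space}\<close> does not entail the class \<open>banach\<close> required by
  the Henstock-Kurzweil integral, so vector-valued integrals are taken in an isomorphic copy of the
  type.\<close>

typedef (overloaded) 'a hilbert_copy = "UNIV :: 'a::{real_inner,complete_space} set" by simp
setup_lifting type_definition_hilbert_copy

instantiation hilbert_copy :: ("{real_inner,complete_space}") real_normed_vector
begin
lift_definition zero_hilbert_copy :: "'a hilbert_copy" is 0 .
lift_definition plus_hilbert_copy :: "'a hilbert_copy \<Rightarrow> 'a hilbert_copy \<Rightarrow> 'a hilbert_copy" is "(+)" .
lift_definition minus_hilbert_copy :: "'a hilbert_copy \<Rightarrow> 'a hilbert_copy \<Rightarrow> 'a hilbert_copy" is "(-)" .
lift_definition uminus_hilbert_copy :: "'a hilbert_copy \<Rightarrow> 'a hilbert_copy" is uminus .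
lift_definition scaleR_hilbert_copy :: "real \<Rightarrow> 'a hilbert_copy \<Rightarrow> 'a hilbert_copy" is scaleR .
lift_definition norm_hilbert_copy :: "'a hilbert_copy \<Rightarrow> real" is norm .
lift_definition dist_hilbert_copy :: "'a hilbert_copy \<Rightarrow> 'a hilbert_copy \<Rightarrow> real" is dist .
lift_definition sgn_hilbert_copy :: "'a hilbert_copy \<Rightarrow> 'a hilbert_copy" is sgn .
definition uniformity_hilbert_copy :: "('a hilbert_copy \<times> 'a hilbert_copy) filter" where
  "uniformity_hilbert_copy = (INF e\<in>{0<..}. principal {(x, y). dist x y < e})"
definition open_hilbert_copy :: "'a hilbert_copy set \<Rightarrow> bool" where
  "open_hilbert_copy U =
     (\<forall>x\<in>U. \<forall>\<^sub>F (x', y) in (uniformity :: ('a hilbert_copy \<times> 'a hilbert_copy) filter). x' = x \<longrightarrow> y \<in> U)"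
instance
  by intro_classes
    (simp_all only: uniformity_hilbert_copy_def open_hilbert_copy_def,
     (transfer, simp add: algebra_simps scaleR_add_right scaleR_add_left dist_norm sgn_div_norm
        norm_triangle_ineq)+)
end

instance hilbert_copy :: ("{real_inner,complete_space}") banach
proof
  fix X :: "nat \<Rightarrow> 'a hilbert_copy"
  assume "Cauchy X"
  then have "Cauchy (\<lambda>n. Rep_hilbert_copy (X n))"
    unfolding Cauchy_def by (simp add: dist_hilbert_copy.rep_eq)
  then obtain l where "(\<lambda>n. Rep_hilbert_copy (X n)) \<longlonglongrightarrow> l"
    using convergent_def Cauchy_convergent by blast
  then have "X \<longlonglongrightarrow> Abs_hilbert_copy l"
    unfolding LIMSEQ_def by (simp add: dist_hilbert_copy.rep_eq Abs_hilbert_copy_inverse)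
  then show "convergent X" by (auto simp: convergent_def)
qed

lemma weak_integral_exists:
  fixes g :: "real \<Rightarrow> 'a::{real_inner,complete_space}"
  assumes "continuous_on {a..b} g"
  shows "\<exists>w. \<forall>y. inner w y = integral {a..b} (\<lambda>t. inner (g t) y)"
proof -
  let ?G = "\<lambda>t. Abs_hilbert_copy (g t)"
  have "continuous_on {a..b} ?G"
    using assms unfolding continuous_on_iff
    by (simp add: dist_hilbert_copy.rep_eq Abs_hilbert_copy_inverse)
  then have int: "?G integrable_on {a..b}" by (rule integrable_continuous_interval)
  have "inner (Rep_hilbert_copy (integral {a..b} ?G)) y = integral {a..b} (\<lambda>t. inner (g t) y)" for y
  proof -
    have "bounded_linear (\<lambda>v. inner (Rep_hilbert_copy v) y)"
    proof (rule bounded_linear_intro[where K = "norm y"])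
      fix u v :: "'a hilbert_copy" and r :: real
      show "inner (Rep_hilbert_copy (u + v)) y = inner (Rep_hilbert_copy u) y + inner (Rep_hilbert_copy v) y"
        by (simp add: plus_hilbert_copy.rep_eq inner_add_left)
      show "inner (Rep_hilbert_copy (r *\<^sub>R u)) y = r *\<^sub>R inner (Rep_hilbert_copy u) y"
        by (simp add: scaleR_hilbert_copy.rep_eq)
      show "norm (inner (Rep_hilbert_copy u) y) \<le> norm u * norm y"
        using Cauchy_Schwarz_ineq2[of "Rep_hilbert_copy u" y] by (simp add: norm_hilbert_copy.rep_eq)
    qed
    from integral_linear[OF int this] show ?thesis
      by (simp add: o_def Abs_hilbert_copy_inverse)
  qed
  then show ?thesis by blast
qed

lemma inner_avg_integral:
  fixes T :: "real \<Rightarrow> 'a::{real_inner,complete_space} \<Rightarrow> 'a"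
  assumes "continuous_on {0..a} (\<lambda>t. T t x)"
  shows "inner (avg_integral T a x) y = (1 / a) * integral {0..a} (\<lambda>t. inner (T t x) y)"
proof -
  obtain w where w: "\<And>y. inner w y = integral {0..a} (\<lambda>t. inner (T t x) y)"
    using weak_integral_exists[OF assms] by blast
  have "avg_integral T a x = (1 / a) *\<^sub>R w"
    unfolding avg_integral_def
  proof (rule the_equality)
    fix v assume "\<forall>y. inner v y = (1 / a) * integral {0..a} (\<lambda>t. inner (T t x) y)"
    then show "v = (1 / a) *\<^sub>R w" by (intro vector_eq_rdot[THEN iffD1]) (simp add: w)
  qed (simp add: w)
  then show ?thesis by (simp add: w)
qed

section \<open>Compactness and fixed point sets\<close>

lemma LIMSEQ_compact_subseq_limits:
  fixes x :: "nat \<Rightarrow> 'a::metric_space"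
  assumes "compact K" "\<And>n. x n \<in> K"
    and limits: "\<And>r l. strict_mono r \<Longrightarrow> (x \<circ> r) \<longlonglongrightarrow> l \<Longrightarrow> l = p"
  shows "x \<longlonglongrightarrow> p"
proof (rule ccontr)
  assume "\<not> x \<longlonglongrightarrow> p"
  then obtain e where "e > 0" and "\<not> (\<exists>N. \<forall>n\<ge>N. dist (x n) p < e)"
    unfolding LIMSEQ_def by blast
  then have "infinite {n. \<not> dist (x n) p < e}"
    unfolding infinite_nat_iff_unbounded_le by (meson not_le_imp_less mem_Collect_eq)
  then obtain r :: "nat \<Rightarrow> nat" where r: "strict_mono r" and far: "\<And>n. \<not> dist (x (r n)) p < e"
    using infinite_enumerate by blast
  obtain l s where s: "strict_mono s" and ls: "((x \<circ> r) \<circ> s) \<longlonglongrightarrow> l"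
    using compact_imp_seq_compact[OF assms(1)] seq_compactE[of K "x \<circ> r"] assms(2) by (metis comp_apply)
  have "l = p" using limits[of "r \<circ> s" l] strict_mono_o[OF r s] ls by (simp add: o_assoc)
  then obtain N where "\<forall>n\<ge>N. dist (((x \<circ> r) \<circ> s) n) p < e"
    using ls \<open>e > 0\<close> unfolding LIMSEQ_def by blast
  with far[of "s N"] show False by simp
qed

lemma continuous_on_compact_weakly_continuous:
  fixes g :: "real \<Rightarrow> 'a::real_inner"
  assumes "compact K" "\<And>t. t \<in> S \<Longrightarrow> g t \<in> K"
    and weak: "\<And>y. continuous_on S (\<lambda>t. inner (g t) y)"
  shows "continuous_on S g"
proof (rule continuous_on_sequentiallyI)
  fix s :: "nat \<Rightarrow> real" and t
  assume s: "\<forall>n. s n \<in> S" and t: "t \<in> S" and "s \<longlonglongrightarrow> t"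
  have "(g \<circ> s) \<longlonglongrightarrow> g t"
  proof (rule LIMSEQ_compact_subseq_limits[OF assms(1)])
    show "(g \<circ> s) n \<in> K" for n using s assms(2) by simp
    fix r l assume r: "strict_mono r" and l: "((g \<circ> s) \<circ> r) \<longlonglongrightarrow> l"
    have "inner l y = inner (g t) y" for y
    proof (rule LIMSEQ_unique)
      show "(\<lambda>n. inner (((g \<circ> s) \<circ> r) n) y) \<longlonglongrightarrow> inner l y"
        using l by (intro tendsto_intros)
      have "(s \<circ> r) \<longlonglongrightarrow> t" using LIMSEQ_subseq_LIMSEQ[OF \<open>s \<longlonglongrightarrow> t\<close> r] .
      then show "(\<lambda>n. inner (((g \<circ> s) \<circ> r) n) y) \<longlonglongrightarrow> inner (g t) y"
        using weak[of y] s t unfolding continuous_on_sequentially by (simp add: o_def)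
    qed
    then show "l = g t" using vector_eq_rdot by blast
  qed
  then show "(\<lambda>n. g (s n)) \<longlonglongrightarrow> g t" by (simp add: o_def)
qed

lemma norm_diff_convex_comb_power2:
  fixes w x y :: "'a::real_inner"
  assumes "u + v = 1"
  shows "(norm (w - (u *\<^sub>R x + v *\<^sub>R y)))\<^sup>2
    = u * (norm (w - x))\<^sup>2 + v * (norm (w - y))\<^sup>2 - u * v * (norm (x - y))\<^sup>2"
proof -
  have v: "v = 1 - u" using assms by simp
  show ?thesis unfolding v power2_norm_eq_inner
    by (simp add: inner_diff_left inner_diff_right inner_add_left inner_add_right inner_commute algebra_simps)
qed

lemma nonexpansive_on_fixpoints_convex:
  fixes C :: "'a::real_inner set"
  assumes "convex C" and g: "nonexpansive_on C g"
  shows "convex {x \<in> C. g x = x}"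
proof (rule convexI, clarify)
  fix x y and u v :: real
  assume x: "x \<in> C" "g x = x" and y: "y \<in> C" "g y = y" and uv: "0 \<le> u" "0 \<le> v" "u + v = 1"
  let ?z = "u *\<^sub>R x + v *\<^sub>R y"
  have z: "?z \<in> C" using assms(1) x y uv unfolding convex_def by blast
  have "norm (g ?z - x) \<le> norm (?z - x)" "norm (g ?z - y) \<le> norm (?z - y)"
    using g x y z unfolding nonexpansive_on_def dist_norm by metis+
  moreover have "?z - x = v *\<^sub>R (y - x)" "?z - y = u *\<^sub>R (x - y)"
    using uv by (simp_all add: algebra_simps flip: scaleR_add_left)
  ultimately have "norm (g ?z - x) \<le> v * norm (x - y)" "norm (g ?z - y) \<le> u * norm (x - y)"
    using uv by (simp_all add: norm_minus_commute)
  then have "(norm (g ?z - ?z))\<^sup>2 \<le> u * (v * norm (x - y))\<^sup>2 + v * (u * norm (x - y))\<^sup>2 - u * v * (norm (x - y))\<^sup>2"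
    unfolding norm_diff_convex_comb_power2[OF uv(3)]
    using uv by (intro diff_right_mono add_mono mult_left_mono power_mono) auto
  also have "\<dots> = u * v * (norm (x - y))\<^sup>2 * (u + v - 1)" by (simp add: algebra_simps power2_eq_square)
  finally show "?z \<in> C \<and> g ?z = ?z" using z uv by simp
qed

lemma nonexpansive_on_continuous_on:
  "nonexpansive_on C g \<Longrightarrow> continuous_on C g"
  by (rule lipschitz_on_continuous_on[of 1]) (auto simp: lipschitz_on_def nonexpansive_on_def)

lemma nonexpansive_on_fixpoints_closed:
  fixes C :: "'a::real_normed_vector set"
  assumes "closed C" "nonexpansive_on C g"
  shows "closed {x \<in> C. g x = x}"
proof -
  have "continuous_on C (\<lambda>x. g x - x)"
    using assms(2) by (intro continuous_intros nonexpansive_on_continuous_on)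
  then show ?thesis using continuous_closed_preimage_constant[of C "\<lambda>x. g x - x" 0] assms(1) by simp
qed

lemma Fix_rep_eq_Inter: "Fix_rep C T = C \<inter> (\<Inter>t\<in>{0..}. {x \<in> C. T t x = x})"
  by (auto simp: Fix_rep_def)

section \<open>Nonexpansive semigroups on compact convex sets\<close>

locale compact_nonexp_semigroup =
  fixes C :: "'a::{real_inner,complete_space} set" and T :: "real \<Rightarrow> 'a \<Rightarrow> 'a"
  assumes compact_C: "compact C" and convex_C: "convex C" and C_nonempty: "C \<noteq> {}"
    and semigroup: "nonexp_semigroup_rep C T"
    and weakly_continuous: "\<And>x y. x \<in> C \<Longrightarrow> continuous_on {0..} (\<lambda>t. inner (T t x) y)"
begin

lemma T_in: "0 \<le> t \<Longrightarrow> x \<in> C \<Longrightarrow> T t x \<in> C"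
  using semigroup unfolding nonexp_semigroup_rep_def by blast

lemma T_nonexpansive: "0 \<le> t \<Longrightarrow> nonexpansive_on C (T t)"
  using semigroup unfolding nonexp_semigroup_rep_def by blast

lemma T_dist_le: "0 \<le> t \<Longrightarrow> x \<in> C \<Longrightarrow> y \<in> C \<Longrightarrow> dist (T t x) (T t y) \<le> dist x y"
  using T_nonexpansive unfolding nonexpansive_on_def by blast

lemma T_add: "0 \<le> s \<Longrightarrow> 0 \<le> t \<Longrightarrow> x \<in> C \<Longrightarrow> T (s + t) x = T s (T t x)"
  using semigroup unfolding nonexp_semigroup_rep_def by blast

lemma continuous_on_orbit: "x \<in> C \<Longrightarrow> continuous_on {0..} (\<lambda>t. T t x)"
  by (rule continuous_on_compact_weakly_continuous[OF compact_C]) (auto intro: T_in weakly_continuous)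

lemma continuous_on_orbit_Icc: "x \<in> C \<Longrightarrow> 0 \<le> a \<Longrightarrow> continuous_on {a..b} (\<lambda>t. T t x)"
  by (rule continuous_on_subset[OF continuous_on_orbit]) auto

lemma integral_inner_orbit:
  assumes "x \<in> C" "0 < a"
  shows "integral {0..a} (\<lambda>t. inner (T t x) y) = a * inner (avg_integral T a x) y"
  using inner_avg_integral[where T = T and a = a and x = x and y = y] assms
  by (simp add: continuous_on_orbit_Icc)

lemma integrable_inner_orbit: "x \<in> C \<Longrightarrow> 0 \<le> a \<Longrightarrow> (\<lambda>t. inner (T t x) y) integrable_on {a..b}"
  by (intro integrable_continuous_interval continuous_intros continuous_on_orbit_Icc)

lemma avg_integral_in:
  assumes "0 < a" "x \<in> C"
  shows "avg_integral T a x \<in> C"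
proof -
  let ?u = "avg_integral T a x"
  let ?c = "metric_proj C ?u"
  \<comment> \<open>The orbit lies in the half-space \<open>inner (y - c) (u - c) \<le> 0\<close>, hence so does its average \<open>u\<close>.\<close>
  have "integral {0..a} (\<lambda>t. inner (T t x - ?c) (?u - ?c)) \<le> integral {0..a} (\<lambda>t. 0)"
  proof (rule integral_le)
    show "(\<lambda>t. inner (T t x - ?c) (?u - ?c)) integrable_on {0..a}"
      using assms by (intro integrable_continuous_interval continuous_intros continuous_on_orbit_Icc) auto
    show "inner (T t x - ?c) (?u - ?c) \<le> 0" if "t \<in> {0..a}" for t
      using that assms metric_proj_dot[OF compact_C convex_C T_in, of t x ?u]
      by (simp add: inner_commute)
  qed (rule integrable_0)
  also have "integral {0..a} (\<lambda>t. inner (T t x - ?c) (?u - ?c))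
      = integral {0..a} (\<lambda>t. inner (T t x) (?u - ?c)) - integral {0..a} (\<lambda>t. inner ?c (?u - ?c))"
    unfolding inner_diff_left using assms(2) by (intro integral_diff integrable_inner_orbit) auto
  also have "\<dots> = a * inner (?u - ?c) (?u - ?c)"
    using integral_inner_orbit[OF assms(2,1), of "?u - ?c"] assms(1)
    by (simp add: inner_diff_left algebra_simps)
  finally have "inner (?u - ?c) (?u - ?c) \<le> 0" using assms(1) by (simp add: mult_le_0_iff)
  then have "?u = ?c" by (metis inner_eq_zero_iff inner_ge_zero order_antisym right_minus_eq)
  then show ?thesis using metric_proj_in[OF compact_C C_nonempty] by metis
qed

lemma avg_integral_dist_le:
  assumes "0 < a" "x \<in> C" "y \<in> C"
  shows "dist (avg_integral T a x) (avg_integral T a y) \<le> dist x y"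
proof -
  let ?d = "avg_integral T a x - avg_integral T a y"
  have "a * inner ?d ?d = integral {0..a} (\<lambda>t. inner (T t x) ?d) - integral {0..a} (\<lambda>t. inner (T t y) ?d)"
    using integral_inner_orbit[OF assms(2,1), of ?d] integral_inner_orbit[OF assms(3,1), of ?d]
    by (simp add: inner_diff_left right_diff_distrib)
  also have "\<dots> = integral {0..a} (\<lambda>t. inner (T t x - T t y) ?d)"
    unfolding inner_diff_left using assms(2,3) by (intro integral_diff[symmetric] integrable_inner_orbit) auto
  also have "\<dots> \<le> integral {0..a} (\<lambda>t. dist x y * norm ?d)"
  proof (rule integral_le)
    show "(\<lambda>t. inner (T t x - T t y) ?d) integrable_on {0..a}"
      using assms by (intro integrable_continuous_interval continuous_intros continuous_on_orbit_Icc) auto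
    show "inner (T t x - T t y) ?d \<le> dist x y * norm ?d" if "t \<in> {0..a}" for t
    proof -
      have "inner (T t x - T t y) ?d \<le> norm (T t x - T t y) * norm ?d" by (rule norm_cauchy_schwarz)
      also have "\<dots> \<le> dist x y * norm ?d"
        using T_dist_le[of t x y] that assms by (intro mult_right_mono) (auto simp: dist_norm)
      finally show ?thesis .
    qed
  qed (rule integrable_const_ivl)
  also have "\<dots> = a * (dist x y * norm ?d)" using assms(1) by simp
  finally have "norm ?d * norm ?d \<le> dist x y * norm ?d"
    using assms(1) by (simp add: power2_eq_square[symmetric] power2_norm_eq_inner)
  then show ?thesis
    by (metis dist_norm mult_right_le_imp_le norm_ge_zero zero_less_norm_iff norm_zero zero_le_dist)
qed

abbreviation "Fix \<equiv> Fix_rep C T"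

lemma Fix_subset: "Fix \<subseteq> C"
  by (auto simp: Fix_rep_def)

lemma compact_Fix: "compact Fix"
proof -
  have "closed {x \<in> C. T t x = x}" if "0 \<le> t" for t
    using compact_imp_closed[OF compact_C] T_nonexpansive[OF that] by (rule nonexpansive_on_fixpoints_closed)
  then show ?thesis unfolding Fix_rep_eq_Inter using compact_C by (intro compact_Int_closed closed_INT) auto
qed

lemma convex_Fix: "convex Fix"
  unfolding Fix_rep_eq_Inter
  using convex_C T_nonexpansive by (intro convex_Int convex_INT nonexpansive_on_fixpoints_convex) auto

lemma avg_integral_Fix:
  assumes "0 < a" "q \<in> Fix"
  shows "avg_integral T a q = q"
proof -
  have "integral {0..a} (\<lambda>t. inner (T t q) y) = integral {0..a} (\<lambda>t. inner q y)" for y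
    using assms(2) by (intro integral_cong) (auto simp: Fix_rep_def)
  then have "inner (avg_integral T a q) y = inner q y" for y
    using integral_inner_orbit[of q a y] assms Fix_subset by auto
  then show ?thesis by (intro vector_eq_rdot[THEN iffD1]) auto
qed

lemma integrable_orbit_dist_power2:
  "x \<in> C \<Longrightarrow> 0 \<le> a \<Longrightarrow> (\<lambda>s. (norm (T s x - y))\<^sup>2) integrable_on {a..b}"
  by (intro integrable_continuous_interval continuous_intros continuous_on_orbit_Icc)

lemma integral_orbit_dist_power2:
  assumes "x \<in> C" "0 < a"
  defines "u \<equiv> avg_integral T a x"
  shows "integral {0..a} (\<lambda>s. (norm (T s x - y))\<^sup>2)
    = integral {0..a} (\<lambda>s. (norm (T s x - u))\<^sup>2) + a * (norm (u - y))\<^sup>2"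
proof -
  have "(norm (T s x - y))\<^sup>2
      = (norm (T s x - u))\<^sup>2 + 2 * inner (T s x) (u - y) + ((norm (u - y))\<^sup>2 - 2 * inner u (u - y))" for s
    unfolding power2_norm_eq_inner by (simp add: inner_diff_left inner_diff_right inner_commute algebra_simps)
  then have "integral {0..a} (\<lambda>s. (norm (T s x - y))\<^sup>2)
      = integral {0..a} (\<lambda>s. (norm (T s x - u))\<^sup>2) + 2 * integral {0..a} (\<lambda>s. inner (T s x) (u - y))
        + a * ((norm (u - y))\<^sup>2 - 2 * inner u (u - y))"
    using assms(1,2)
    by (simp add: integral_add integrable_orbit_dist_power2 integrable_continuous_interval
        continuous_intros continuous_on_orbit_Icc)
  also have "integral {0..a} (\<lambda>s. inner (T s x) (u - y)) = a * inner u (u - y)"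
    unfolding u_def by (rule integral_inner_orbit[OF assms(1,2)])
  finally show ?thesis by (simp add: algebra_simps)
qed

lemma integral_orbit_dist_power2_shift:
  assumes "x \<in> C" "u \<in> C" "0 \<le> h" "h \<le> a"
    and D: "\<And>p q. p \<in> C \<Longrightarrow> q \<in> C \<Longrightarrow> dist p q \<le> D"
  shows "integral {0..a} (\<lambda>s. (norm (T s x - T h u))\<^sup>2)
    \<le> h * D\<^sup>2 + integral {0..a} (\<lambda>s. (norm (T s x - u))\<^sup>2)"
proof -
  define \<phi> where "\<phi> y s = (norm (T s x - y))\<^sup>2" for y s
  have int: "\<phi> y integrable_on {p..q}" if "0 \<le> p" for y p q
    unfolding \<phi>_def using assms(1) that by (rule integrable_orbit_dist_power2)
  have "integral {0..h} (\<phi> (T h u)) \<le> integral {0..h} (\<lambda>s. D\<^sup>2)"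
  proof (rule integral_le)
    show "\<phi> (T h u) s \<le> D\<^sup>2" if "s \<in> {0..h}" for s
      using D[OF T_in T_in, of s x h u] that assms unfolding \<phi>_def
      by (simp add: dist_norm power_mono)
  qed (use int in auto)
  moreover have "integral {h..a} (\<phi> (T h u)) \<le> integral {h..a} (\<lambda>s. \<phi> u (s - h))"
  proof (rule integral_le)
    show "(\<lambda>s. \<phi> u (s - h)) integrable_on {h..a}"
    proof -
      have "continuous_on {h..a} (\<lambda>s. T (s - h) x)"
        by (rule continuous_on_compose2[OF continuous_on_orbit[OF assms(1)]]) (auto intro!: continuous_intros)
      then show ?thesis unfolding \<phi>_def by (intro integrable_continuous_interval continuous_intros)
    qed
    show "\<phi> (T h u) s \<le> \<phi> u (s - h)" if "s \<in> {h..a}" for s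
    proof -
      have "T s x = T h (T (s - h) x)" using T_add[of h "s - h" x] that assms by simp
      then show ?thesis
        using T_dist_le[OF assms(3) T_in assms(2), of "s - h" x] that assms unfolding \<phi>_def
        by (simp add: dist_norm power_mono)
    qed
  qed (use int assms in auto)
  moreover have "integral {h..a} (\<lambda>s. \<phi> u (s - h)) = integral {0..a - h} (\<phi> u)"
    using integral_shift_Icc_real[of h a "\<phi> u" "-h"] by (simp add: o_def)
  moreover have "integral {0..a - h} (\<phi> u) \<le> integral {0..a} (\<phi> u)"
  proof -
    have "0 \<le> integral {a - h..a} (\<phi> u)"
      using assms int by (intro integral_nonneg) (auto simp: \<phi>_def)
    then show ?thesis
      using Henstock_Kurzweil_Integration.integral_combine[of 0 "a - h" a "\<phi> u"] int[of 0] assms by simp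
  qed
  moreover have "integral {0..a} (\<phi> (T h u)) = integral {0..h} (\<phi> (T h u)) + integral {h..a} (\<phi> (T h u))"
    using Henstock_Kurzweil_Integration.integral_combine[of 0 h a "\<phi> (T h u)"] int[of 0] assms by simp
  ultimately show ?thesis unfolding \<phi>_def using assms(3) by simp
qed

lemma avg_integral_almost_fixed:
  assumes "x \<in> C" "0 < a" "0 \<le> h"
    and D: "\<And>p q. p \<in> C \<Longrightarrow> q \<in> C \<Longrightarrow> dist p q \<le> D"
  shows "a * (norm (T h (avg_integral T a x) - avg_integral T a x))\<^sup>2 \<le> h * D\<^sup>2"
proof (cases "h \<le> a")
  case True
  then show ?thesis
    using integral_orbit_dist_power2[OF assms(1,2), of "T h (avg_integral T a x)"]
      integral_orbit_dist_power2_shift[OF assms(1) avg_integral_in[OF assms(2,1)] assms(3) True D]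
    by (simp add: norm_minus_commute)
next
  case False
  have "(norm (T h (avg_integral T a x) - avg_integral T a x))\<^sup>2 \<le> D\<^sup>2"
    using D[OF T_in[OF assms(3) avg_integral_in[OF assms(2,1)]] avg_integral_in[OF assms(2,1)]]
    by (simp add: dist_norm power_mono)
  then show ?thesis
    using False assms(2) by (meson less_le_not_le mult_mono nle_le order_trans zero_le_power2)
qed

lemma avg_integral_asymptotically_fixed:
  assumes "\<And>n. x n \<in> C" "\<And>n. 0 < a n" "filterlim a at_top sequentially" "0 \<le> h"
  shows "(\<lambda>n. T h (avg_integral T (a n) (x n)) - avg_integral T (a n) (x n)) \<longlonglongrightarrow> 0"
proof (rule Lim_null_comparison)
  define D where "D = diameter C"
  have D: "dist p q \<le> D" if "p \<in> C" "q \<in> C" for p q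
    unfolding D_def using compact_imp_bounded[OF compact_C] that by (rule diameter_bounded_bound)
  show "\<forall>\<^sub>F n in sequentially. norm (T h (avg_integral T (a n) (x n)) - avg_integral T (a n) (x n))
      \<le> sqrt (h * D\<^sup>2 / a n)"
    using avg_integral_almost_fixed[OF assms(1) assms(2) assms(4) D] assms(2)
    by (intro always_eventually allI real_le_rsqrt) (simp add: field_simps)
  have "(\<lambda>n. h * D\<^sup>2 / a n) \<longlonglongrightarrow> 0"
    by (rule tendsto_divide_0[OF tendsto_const filterlim_at_top_imp_at_infinity[OF assms(3)]])
  then show "(\<lambda>n. sqrt (h * D\<^sup>2 / a n)) \<longlonglongrightarrow> 0"
    using tendsto_real_sqrt by fastforce
qed

lemma avg_integral_limit_in_Fix:
  assumes "\<And>n. x n \<in> C" "\<And>n. 0 < a n" "filterlim a at_top sequentially"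
    and lim: "(\<lambda>n. avg_integral T (a n) (x n)) \<longlonglongrightarrow> l"
  shows "l \<in> Fix"
proof -
  let ?u = "\<lambda>n. avg_integral T (a n) (x n)"
  have uC: "?u n \<in> C" for n using assms(2,1) by (rule avg_integral_in)
  have lC: "l \<in> C" by (rule closed_sequentially[OF compact_imp_closed[OF compact_C] uC lim])
  have "T h l = l" if h: "0 \<le> h" for h
  proof (rule LIMSEQ_unique)
    show "(\<lambda>n. T h (?u n)) \<longlonglongrightarrow> T h l"
      using continuous_on_tendsto_compose[OF nonexpansive_on_continuous_on[OF T_nonexpansive[OF h]] lim lC]
        uC by simp
    show "(\<lambda>n. T h (?u n)) \<longlonglongrightarrow> l"
      using tendsto_add[OF lim avg_integral_asymptotically_fixed[where x = x and a = a, OF assms(1-3) h]] by simp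
  qed
  then show ?thesis using lC by (simp add: Fix_rep_def)
qed

lemma sunny_nonexp_retraction_Fix:
  assumes "Fix \<noteq> {}"
  shows "sunny_nonexp_retraction C Fix (metric_proj Fix)"
    and "sunny_nonexp_retraction C Fix Q \<Longrightarrow> y \<in> C \<Longrightarrow> Q y = metric_proj Fix y"
  using metric_proj_sunny_nonexp_retraction[OF compact_Fix convex_Fix assms Fix_subset]
    sunny_nonexp_retraction_unique[OF _ convex_C compact_Fix convex_Fix] by auto

lemma implicit_iterate_exists:
  assumes f: "contraction_on C \<alpha> f" and e: "0 < e" "e < 1" and "0 < a"
  shows "\<exists>w\<in>C. w = e *\<^sub>R f w + (1 - e) *\<^sub>R avg_integral T a w"
proof -
  let ?\<Phi> = "\<lambda>w. e *\<^sub>R f w + (1 - e) *\<^sub>R avg_integral T a w"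
  have \<alpha>: "0 \<le> \<alpha>" "\<alpha> < 1" and fC: "\<And>x. x \<in> C \<Longrightarrow> f x \<in> C"
    and f_dist: "\<And>x y. x \<in> C \<Longrightarrow> y \<in> C \<Longrightarrow> dist (f x) (f y) \<le> \<alpha> * dist x y"
    using f unfolding contraction_on_def by auto
  have "\<exists>!w\<in>C. ?\<Phi> w = w"
  proof (rule Banach_fix[OF compact_imp_complete[OF compact_C] C_nonempty])
    show "0 \<le> e * \<alpha> + (1 - e)" using e \<alpha> by simp
    have "e * \<alpha> < e * 1" using e \<alpha> by (intro mult_strict_left_mono)
    then show "e * \<alpha> + (1 - e) < 1" by simp
    show "?\<Phi> ` C \<subseteq> C"
    proof clarify
      fix w assume "w \<in> C"
      then show "?\<Phi> w \<in> C"
        using e by (intro convexD[OF convex_C] fC avg_integral_in[OF assms(4)]) auto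
    qed
    show "dist (?\<Phi> x) (?\<Phi> y) \<le> (e * \<alpha> + (1 - e)) * dist x y" if "x \<in> C" "y \<in> C" for x y
    proof -
      let ?d = "avg_integral T a x - avg_integral T a y"
      have "?\<Phi> x - ?\<Phi> y = e *\<^sub>R (f x - f y) + (1 - e) *\<^sub>R ?d"
        by (simp add: scaleR_diff_right)
      then have "dist (?\<Phi> x) (?\<Phi> y) \<le> norm (e *\<^sub>R (f x - f y)) + norm ((1 - e) *\<^sub>R ?d)"
        by (metis dist_norm norm_triangle_ineq)
      also have "\<dots> = e * dist (f x) (f y) + (1 - e) * norm ?d"
        using e by (simp add: dist_norm)
      also have "\<dots> \<le> e * (\<alpha> * dist x y) + (1 - e) * dist x y"
        using f_dist avg_integral_dist_le[OF assms(4)] that e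
        by (intro add_mono mult_left_mono) (auto simp: dist_norm)
      finally show ?thesis by (simp add: algebra_simps)
    qed
  qed
  then show ?thesis by (metis (no_types, lifting))
qed

lemma implicit_iterate_dist_le:
  assumes f: "contraction_on C \<alpha> f" and "0 < e" "e < 1" "0 < a" "z \<in> C" "p \<in> Fix"
    and z: "z = e *\<^sub>R f z + (1 - e) *\<^sub>R avg_integral T a z"
  shows "(1 - \<alpha>) * (norm (z - p))\<^sup>2 \<le> inner (f p - p) (z - p)"
proof -
  let ?u = "avg_integral T a z"
  have pC: "p \<in> C" using assms(6) Fix_subset by auto
  have "norm (?u - p) \<le> norm (z - p)"
    using avg_integral_dist_le[OF assms(4,5) pC] avg_integral_Fix[OF assms(4,6)] by (simp add: dist_norm)
  then have "norm (?u - p) * norm (z - p) \<le> (norm (z - p))\<^sup>2"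
    by (simp add: mult_right_mono power2_eq_square)
  then have u: "inner (?u - p) (z - p) \<le> (norm (z - p))\<^sup>2"
    using norm_cauchy_schwarz[of "?u - p" "z - p"] by linarith
  have "z - p = e *\<^sub>R (f z - p) + (1 - e) *\<^sub>R (?u - p)"
    by (subst z) (simp add: algebra_simps)
  then have "(norm (z - p))\<^sup>2 = e * inner (f z - p) (z - p) + (1 - e) * inner (?u - p) (z - p)"
    by (metis inner_add_left inner_scaleR_left power2_norm_eq_inner)
  then have "e * (norm (z - p))\<^sup>2 \<le> e * inner (f z - p) (z - p)"
    using u assms(3) mult_left_mono[OF u, of "1 - e"] by (simp add: algebra_simps)
  then have "(norm (z - p))\<^sup>2 \<le> inner (f z - f p) (z - p) + inner (f p - p) (z - p)"
    using assms(2) by (simp add: inner_diff_left)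
  moreover have "inner (f z - f p) (z - p) \<le> \<alpha> * (norm (z - p))\<^sup>2"
  proof -
    have "inner (f z - f p) (z - p) \<le> norm (f z - f p) * norm (z - p)" by (rule norm_cauchy_schwarz)
    also have "\<dots> \<le> (\<alpha> * norm (z - p)) * norm (z - p)"
      using f assms(5) pC unfolding contraction_on_def by (intro mult_right_mono) (auto simp: dist_norm)
    finally show ?thesis by (simp add: power2_eq_square mult.assoc)
  qed
  ultimately show ?thesis by (simp add: algebra_simps)
qed

lemma metric_proj_Fix_comp_fixpoint:
  assumes f: "contraction_on C \<alpha> f" and "Fix \<noteq> {}"
  shows "\<exists>p\<in>Fix. metric_proj Fix (f p) = p"
proof -
  have "\<exists>!p\<in>Fix. (metric_proj Fix \<circ> f) p = p"
  proof (rule Banach_fix[OF compact_imp_complete[OF compact_Fix] assms(2)])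
    show "0 \<le> \<alpha>" "\<alpha> < 1" using f unfolding contraction_on_def by auto
    show "(metric_proj Fix \<circ> f) ` Fix \<subseteq> Fix"
      using metric_proj_in[OF compact_Fix assms(2)] by auto
    show "dist ((metric_proj Fix \<circ> f) x) ((metric_proj Fix \<circ> f) y) \<le> \<alpha> * dist x y"
      if "x \<in> Fix" "y \<in> Fix" for x y
    proof -
      have "dist (f x) (f y) \<le> \<alpha> * dist x y"
        using f that Fix_subset unfolding contraction_on_def by blast
      then show ?thesis
        using metric_proj_nonexpansive[OF compact_Fix convex_Fix assms(2), of "f x" "f y"] by simp
    qed
  qed
  then show ?thesis by auto
qed

lemma implicit_iterate_minus_avg_integral:
  assumes f: "contraction_on C \<alpha> f" and e: "\<And>n. 0 \<le> e n" "e \<longlonglongrightarrow> 0" and a: "\<And>n. 0 < a n"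
    and z: "\<And>n. z n \<in> C" "\<And>n. z n = e n *\<^sub>R f (z n) + (1 - e n) *\<^sub>R avg_integral T (a n) (z n)"
  shows "(\<lambda>n. z n - avg_integral T (a n) (z n)) \<longlonglongrightarrow> 0"
proof (rule Lim_null_comparison)
  show "\<forall>\<^sub>F n in sequentially. norm (z n - avg_integral T (a n) (z n)) \<le> e n * diameter C"
  proof (intro always_eventually allI)
    fix n
    let ?u = "avg_integral T (a n) (z n)"
    have "z n - ?u = e n *\<^sub>R (f (z n) - ?u)"
      by (subst z(2)) (simp add: algebra_simps)
    moreover have "f (z n) \<in> C" "?u \<in> C"
      using f z(1) avg_integral_in[OF a z(1)] unfolding contraction_on_def by blast+
    then have "norm (f (z n) - ?u) \<le> diameter C"
      using diameter_bounded_bound[OF compact_imp_bounded[OF compact_C]] by (simp add: dist_norm)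
    ultimately show "norm (z n - ?u) \<le> e n * diameter C" using e(1)[of n] by (simp add: mult_left_mono)
  qed
  show "(\<lambda>n. e n * diameter C) \<longlonglongrightarrow> 0" using tendsto_mult_left_zero[OF e(2)] by simp
qed

lemma implicit_iterates_LIMSEQ:
  assumes f: "contraction_on C \<alpha> f"
    and e: "\<And>n. 0 < e n \<and> e n < 1" "e \<longlonglongrightarrow> 0"
    and a: "\<And>n. 0 < a n" "filterlim a at_top sequentially"
    and z: "\<And>n. z n \<in> C" "\<And>n. z n = e n *\<^sub>R f (z n) + (1 - e n) *\<^sub>R avg_integral T (a n) (z n)"
    and p: "p \<in> Fix" "metric_proj Fix (f p) = p"
  shows "z \<longlonglongrightarrow> p"
proof (rule LIMSEQ_compact_subseq_limits[OF compact_C z(1)])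
  fix r l assume r: "strict_mono r" and l: "(z \<circ> r) \<longlonglongrightarrow> l"
  have "(\<lambda>n. z n - avg_integral T (a n) (z n)) \<longlonglongrightarrow> 0"
    using e(1) less_imp_le by (intro implicit_iterate_minus_avg_integral[OF f _ e(2) a(1) z]) blast
  from tendsto_diff[OF l LIMSEQ_subseq_LIMSEQ[OF this r]]
  have "(\<lambda>n. avg_integral T (a (r n)) (z (r n))) \<longlonglongrightarrow> l" by (simp add: o_def)
  then have lF: "l \<in> Fix"
    using avg_integral_limit_in_Fix[of "z \<circ> r" "a \<circ> r"] z(1) a filterlim_compose[OF a(2) filterlim_subseq[OF r]]
    by (simp add: o_def)
  have zr: "(\<lambda>n. z (r n)) \<longlonglongrightarrow> l" using l by (simp add: o_def)
  have "(1 - \<alpha>) * (norm (l - p))\<^sup>2 \<le> inner (f p - p) (l - p)"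
  proof (rule LIMSEQ_le)
    show "(\<lambda>n. (1 - \<alpha>) * (norm (z (r n) - p))\<^sup>2) \<longlonglongrightarrow> (1 - \<alpha>) * (norm (l - p))\<^sup>2"
      "(\<lambda>n. inner (f p - p) (z (r n) - p)) \<longlonglongrightarrow> inner (f p - p) (l - p)"
      using zr by (auto intro!: tendsto_intros)
    show "\<exists>N. \<forall>n\<ge>N. (1 - \<alpha>) * (norm (z (r n) - p))\<^sup>2 \<le> inner (f p - p) (z (r n) - p)"
      using implicit_iterate_dist_le[OF f _ _ a(1) z(1) p(1) z(2)] e(1) by auto
  qed
  also have "inner (f p - p) (l - p) \<le> 0"
    using metric_proj_dot[OF compact_Fix convex_Fix lF, of "f p"] p(2) by simp
  finally show "l = p" using f unfolding contraction_on_def by (simp add: mult_le_0_iff)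
qed

end

lemma continuous_on_in_fnspace:
  assumes "left_invariant_subspace X" "in_fnspace X h"
  shows "continuous_on {0..} h"
proof -
  obtain g where "g \<in> X" "\<And>t. t \<ge> 0 \<Longrightarrow> g t = h t"
    using assms(2) unfolding in_fnspace_def by blast
  moreover have "continuous_on {0..} g"
    using assms(1) \<open>g \<in> X\<close> unfolding left_invariant_subspace_def bcont_Rplus_def by blast
  ultimately show ?thesis using continuous_on_cong[of "{0..}" "{0..}" g h] by simp
qed

lemma limitin_product_euclideanI:
  assumes "\<And>i. i \<in> I \<Longrightarrow> (\<lambda>n. x n i) \<longlonglongrightarrow> l i"
  shows "limitin (product_topology (\<lambda>i. euclidean) I) (\<lambda>n. restrict (x n) I) (restrict l I) sequentially"
  using assms by (simp add: limitin_componentwise topspace_product_topology)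

theorem corollary4p2:
  fixes I :: "'i set"
    and C :: "'i \<Rightarrow> 'h::{real_inner, complete_space} set"
    and T :: "'i \<Rightarrow> real \<Rightarrow> 'h \<Rightarrow> 'h"
    and X :: "(real \<Rightarrow> real) set"
    and f :: "'i \<Rightarrow> 'h \<Rightarrow> 'h"
    and \<alpha> :: "'i \<Rightarrow> real"
    and \<epsilon> :: "nat \<Rightarrow> real"
    and a :: "nat \<Rightarrow> real"
  assumes "I \<noteq> {}"
    and "\<And>i. i \<in> I \<Longrightarrow> C i \<noteq> {} \<and> compact (C i) \<and> convex (C i)"
    and "\<And>i. i \<in> I \<Longrightarrow> nonexp_semigroup_rep (C i) (T i)"
    and "\<And>i. i \<in> I \<Longrightarrow> Fix_rep (C i) (T i) \<noteq> {}"
    and "left_invariant_subspace X"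
    and "in_fnspace X (\<lambda>t. 1)"
    and "\<And>i x y. i \<in> I \<Longrightarrow> x \<in> C i \<Longrightarrow> in_fnspace X (\<lambda>t. inner (T i t x) y)"
    and "\<And>i. i \<in> I \<Longrightarrow> contraction_on (C i) (\<alpha> i) (f i)"
    and "\<And>n. 0 < \<epsilon> n \<and> \<epsilon> n < 1"
    and "\<epsilon> \<longlonglongrightarrow> 0"
    and "\<And>n. 0 < a n"
    and "filterlim a at_top sequentially"
  shows "\<exists>P x. (\<forall>i\<in>I. sunny_nonexp_retraction (C i) (Fix_rep (C i) (T i)) (P i)
                   \<and> (\<forall>Q. sunny_nonexp_retraction (C i) (Fix_rep (C i) (T i)) Q
                          \<longrightarrow> (\<forall>y\<in>C i. Q y = P i y))
                   \<and> x i \<in> C i)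
           \<and> (\<forall>n. \<forall>i\<in>I. \<exists>w\<in>C i.
                 w = \<epsilon> n *\<^sub>R f i w + (1 - \<epsilon> n) *\<^sub>R avg_integral (T i) (a n) w)
           \<and> (\<forall>z :: nat \<Rightarrow> 'i \<Rightarrow> 'h.
                 (\<forall>n. \<forall>i\<in>I. z n i \<in> C i \<and>
                    z n i = \<epsilon> n *\<^sub>R f i (z n i) + (1 - \<epsilon> n) *\<^sub>R avg_integral (T i) (a n) (z n i))
                 \<longrightarrow> limitin (product_topology (\<lambda>i. euclidean) I)
                        (\<lambda>n. restrict (z n) I) (restrict (\<lambda>i. P i (x i)) I) sequentially)"
proof -
  have S: "compact_nonexp_semigroup (C i) (T i)" if "i \<in> I" for i
    using assms(2-3,5,7) that by unfold_locales (auto intro: continuous_on_in_fnspace)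
  define P where "P i = metric_proj (Fix_rep (C i) (T i))" for i
  have "\<forall>i\<in>I. \<exists>p\<in>Fix_rep (C i) (T i). P i (f i p) = p"
    unfolding P_def using compact_nonexp_semigroup.metric_proj_Fix_comp_fixpoint[OF S assms(8,4)] by blast
  then obtain p where p: "\<And>i. i \<in> I \<Longrightarrow> p i \<in> Fix_rep (C i) (T i) \<and> P i (f i (p i)) = p i"
    by metis
  have retraction: "sunny_nonexp_retraction (C i) (Fix_rep (C i) (T i)) (P i)
      \<and> (\<forall>Q. sunny_nonexp_retraction (C i) (Fix_rep (C i) (T i)) Q \<longrightarrow> (\<forall>y\<in>C i. Q y = P i y))
      \<and> p i \<in> C i" if "i \<in> I" for i
    using compact_nonexp_semigroup.sunny_nonexp_retraction_Fix[OF S assms(4)] p compact_nonexp_semigroup.Fix_subset[OF S]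
      that unfolding P_def by blast
  have iterate: "\<exists>w\<in>C i. w = \<epsilon> n *\<^sub>R f i w + (1 - \<epsilon> n) *\<^sub>R avg_integral (T i) (a n) w"
    if "i \<in> I" for i n
    using compact_nonexp_semigroup.implicit_iterate_exists[OF S assms(8)] assms(9,11) that by blast
  have limit: "limitin (product_topology (\<lambda>i. euclidean) I) (\<lambda>n. restrict (z n) I)
      (restrict (\<lambda>i. P i (p i)) I) sequentially"
    if z: "\<forall>n. \<forall>i\<in>I. z n i \<in> C i \<and>
      z n i = \<epsilon> n *\<^sub>R f i (z n i) + (1 - \<epsilon> n) *\<^sub>R avg_integral (T i) (a n) (z n i)" for z
  proof (rule limitin_product_euclideanI)
    fix i assume i: "i \<in> I"
    show "(\<lambda>n. z n i) \<longlonglongrightarrow> P i (p i)"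
      using compact_nonexp_semigroup.implicit_iterates_LIMSEQ[OF S[OF i] assms(8)[OF i] assms(9-12)]
        z p[OF i] i metric_proj_self unfolding P_def by fastforce
  qed
  show ?thesis using retraction iterate limit by blast
qed

end
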